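(* Let $\dot E=(E,(C,S),(D,T))$ be a bi-separated graph with distinguished subsets. If $\dot E$ is tame, then $\dot E$ is the direct limit (union) of a directed family of finite complete sub-objects of $\dot E$. Conversely, if $\dot E$ is the direct limit (union) of a directed family of finite complete sub-objects, then $\dot E$ is tame.
   Context: A graph $E=(E^0,E^1,r,s)$ has vertex set $E^0$, edge set $E^1$, range and source maps $r,s:E^1\to E^0$. A bi-separated graph with distinguished subsets is $\dot E=(E,(C,S),(D,T))$ where: $C=\bigsqcup_{v}C_v$ with $C_v$ a partition of $s^{-1}(v)$ into nonempty subsets for each non-sink $v$; $D=\bigsqcup_v D_v$ with $D_v$ a partition of $r^{-1}(v)$ into nonempty subsets for each non-source $v$; $|X\cap Y|\le 1$ for all $X\in C$, $Y\in D$; $C_{\rm fin}=\{X\in C:|X|<\infty\}$, $D_{\rm fin}=\{Y\in D:|Y|<\infty\}$, and $S\subseteq C_{\rm fin}$, $T\subseteq D_{\rm fin}$. A complete sub-object of $\dot E$ is given by a subgraph $E'$ of $E$ (i.e. $(E')^0\subseteq E^0$, $(E')^1\subseteq E^1$ with $s(e),r(e)\in (E')^0$ for $e\in(E')^1$) such that every $X\in S$ with $X\cap (E')^1\neq\emptyset$ satisfies $X\subseteq (E')^1$ and every $Y\in T$ with $Y\cap(E')^1\ne\emptyset$ satisfies $Y\subseteq (E')^1$, equipped with $C'=\{X\cap(E')^1: X\in C\setminus S,\ X\cap (E')^1\neq\emptyset\}\sqcup S'$, $S'=\{X\in S: X\cap(E')^1\neq\emptyset\}$, $D'=\{Y\cap(E')^1:Y\in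 D\setminus T,\ Y\cap(E')^1\ne\emptyset\}\sqcup T'$, $T'=\{Y\in T:Y\cap (E')^1\neq\emptyset\}$. It is finite if $(E')^0$ and $(E')^1$ are finite. A family of complete sub-objects is directed if any two are contained in a third (as subgraphs); $\dot E$ is its direct limit (union) if every vertex and every edge of $E$ lies in some member of the family. Tameness: let $S_1=\{X\in S: X\cap Y\neq\emptyset \text{ for some } Y\in T\}$ and $T_1=\{Y\in T: X\cap Y\ne\emptyset\text{ for some }X\in S\}$. On $S_1$ define $X\sim_T X'$ if $X=X'$ or there is a sequence $X_0,Y_1,X_1,\dots,Y_n,X_n$ with $X_i\in S$, $Y_i\in T$, $X_0=X$, $X_n=X'$, $X_{i-1}\cap Y_i\ne\emptyset$ and $Y_i\cap X_i\neq\emptyset$ for all $i$; define $\sim_S$ on $T_1$ symmetrically (sequences $Y_0,X_1,Y_1,\dots$ with consecutive members intersecting). These are equivalence relations. $\dot E$ is tame if every $\sim_T$-class in $S_1$ and every $\sim_S$-class in $T_1$ is finite. *)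

theory Defs
  imports Main
begin

text \<open>A graph is given by a vertex set V, an edge set Ed and range/source maps r, s.
  Separations C, D and distinguished subsets S, T are sets of edge sets.\<close>

definition is_partition_of :: "'a set set \<Rightarrow> 'a set \<Rightarrow> bool" where
  "is_partition_of P A \<longleftrightarrow>
     (\<forall>X\<in>P. X \<noteq> {} \<and> X \<subseteq> A) \<and>
     (\<forall>X\<in>P. \<forall>X'\<in>P. X \<noteq> X' \<longrightarrow> X \<inter> X' = {}) \<and>
     \<Union>P = A"

definition is_graph :: "'v set \<Rightarrow> 'e set \<Rightarrow> ('e \<Rightarrow> 'v) \<Rightarrow> ('e \<Rightarrow> 'v) \<Rightarrow> bool" where
  "is_graph V Ed r s \<longleftrightarrow> (\<forall>e\<in>Ed. s e \<in> V \<and> r e \<in> V)"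

definition bisep_graph ::
  "'v set \<Rightarrow> 'e set \<Rightarrow> ('e \<Rightarrow> 'v) \<Rightarrow> ('e \<Rightarrow> 'v) \<Rightarrow>
   'e set set \<Rightarrow> 'e set set \<Rightarrow> 'e set set \<Rightarrow> 'e set set \<Rightarrow> bool" where
  "bisep_graph V Ed r s C S D T \<longleftrightarrow>
     is_graph V Ed r s \<and>
     (\<forall>X\<in>C. \<exists>v\<in>V. X \<subseteq> {e\<in>Ed. s e = v}) \<and>
     (\<forall>v\<in>V. {e\<in>Ed. s e = v} \<noteq> {} \<longrightarrow>
        is_partition_of {X\<in>C. X \<subseteq> {e\<in>Ed. s e = v}} {e\<in>Ed. s e = v}) \<and>
     (\<forall>Y\<in>D. \<exists>v\<in>V. Y \<subseteq> {e\<in>Ed. r e = v}) \<and>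
     (\<forall>v\<in>V. {e\<in>Ed. r e = v} \<noteq> {} \<longrightarrow>
        is_partition_of {Y\<in>D. Y \<subseteq> {e\<in>Ed. r e = v}} {e\<in>Ed. r e = v}) \<and>
     (\<forall>X\<in>C. \<forall>Y\<in>D. finite (X \<inter> Y) \<and> card (X \<inter> Y) \<le> 1) \<and>
     S \<subseteq> {X\<in>C. finite X} \<and>
     T \<subseteq> {Y\<in>D. finite Y}"

definition S1 :: "'e set set \<Rightarrow> 'e set set \<Rightarrow> 'e set set" where
  "S1 S T = {X\<in>S. \<exists>Y\<in>T. X \<inter> Y \<noteq> {}}"

definition stepT :: "'e set set \<Rightarrow> 'e set set \<Rightarrow> ('e set \<times> 'e set) set" where
  "stepT S T = {(X, X'). X \<in> S \<and> X' \<in> S \<and> (\<exists>Y\<in>T. X \<inter> Y \<noteq> {} \<and> Y \<inter> X' \<noteq> {})}"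

definition simT :: "'e set set \<Rightarrow> 'e set set \<Rightarrow> 'e set \<Rightarrow> 'e set \<Rightarrow> bool" where
  "simT S T X X' \<longleftrightarrow> X \<in> S1 S T \<and> X' \<in> S1 S T \<and> (X, X') \<in> (stepT S T)\<^sup>*"

definition tame :: "'e set set \<Rightarrow> 'e set set \<Rightarrow> bool" where
  "tame S T \<longleftrightarrow>
     (\<forall>X\<in>S1 S T. finite {X'. simT S T X X'}) \<and>
     (\<forall>Y\<in>S1 T S. finite {Y'. simT T S Y Y'})"

text \<open>Complete sub-object, given by its subgraph (V', E'); the induced separations
  C', S', D', T' are determined by the subgraph.\<close>
definition complete_subobj ::
  "'v set \<Rightarrow> 'e set \<Rightarrow> ('e \<Rightarrow> 'v) \<Rightarrow> ('e \<Rightarrow> 'v) \<Rightarrow> 'e set set \<Rightarrow> 'e set set \<Rightarrow>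
   'v set \<Rightarrow> 'e set \<Rightarrow> bool" where
  "complete_subobj V Ed r s S T V' E' \<longleftrightarrow>
     V' \<subseteq> V \<and> E' \<subseteq> Ed \<and> (\<forall>e\<in>E'. s e \<in> V' \<and> r e \<in> V') \<and>
     (\<forall>X\<in>S. X \<inter> E' \<noteq> {} \<longrightarrow> X \<subseteq> E') \<and>
     (\<forall>Y\<in>T. Y \<inter> E' \<noteq> {} \<longrightarrow> Y \<subseteq> E')"

definition directed_family :: "('v set \<times> 'e set) set \<Rightarrow> bool" where
  "directed_family F \<longleftrightarrow> F \<noteq> {} \<and>
     (\<forall>A\<in>F. \<forall>B\<in>F. \<exists>G\<in>F. fst A \<subseteq> fst G \<and> snd A \<subseteq> snd G \<and>
                            fst B \<subseteq> fst G \<and> snd B \<subseteq> snd G)"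

definition is_union_of :: "'v set \<Rightarrow> 'e set \<Rightarrow> ('v set \<times> 'e set) set \<Rightarrow> bool" where
  "is_union_of V Ed F \<longleftrightarrow> (\<forall>v\<in>V. \<exists>A\<in>F. v \<in> fst A) \<and> (\<forall>e\<in>Ed. \<exists>A\<in>F. e \<in> snd A)"

end

theory Submission
  imports Defs
begin

text \<open>An edge set is complete exactly when it is saturated for both S and T. If \<open>\<dot>E\<close> is
  tame, the saturation of a single member X of S is finite: it consists of the \<open>\<sim>\<^sub>T\<close>-class
  of X together with the finitely many members of T meeting it, all of which are finite sets.
  Hence every edge lies in a finite complete sub-object, and the finite complete sub-objects,
  being closed under unions, form the required directed family. Conversely, a
  \<open>\<sim>\<^sub>T\<close>-class started inside a finite saturated edge set never leaves it, so it is finite.\<close>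

definition saturated :: "'e set set \<Rightarrow> 'e set \<Rightarrow> bool" where
  "saturated S E' \<longleftrightarrow> (\<forall>X\<in>S. X \<inter> E' \<noteq> {} \<longrightarrow> X \<subseteq> E')"

lemma saturated_Un: "saturated S A \<Longrightarrow> saturated S B \<Longrightarrow> saturated S (A \<union> B)"
  unfolding saturated_def by blast

lemma complete_subobj_iff_saturated:
  "complete_subobj V Ed r s S T V' E' \<longleftrightarrow>
     V' \<subseteq> V \<and> E' \<subseteq> Ed \<and> (\<forall>e\<in>E'. s e \<in> V' \<and> r e \<in> V') \<and> saturated S E' \<and> saturated T E'"
  unfolding complete_subobj_def saturated_def ..

lemma complete_subobj_Un:
  assumes "complete_subobj V Ed r s S T V1 E1" "complete_subobj V Ed r s S T V2 E2"
  shows "complete_subobj V Ed r s S T (V1 \<union> V2) (E1 \<union> E2)"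
  using assms saturated_Un unfolding complete_subobj_iff_saturated by blast

lemma pairwise_disjnt_if_fibrewise_partition:
  assumes "\<forall>X\<in>C. \<exists>v\<in>V. X \<subseteq> {e\<in>Ed. f e = v}"
    and "\<forall>v\<in>V. {e\<in>Ed. f e = v} \<noteq> {} \<longrightarrow>
           is_partition_of {X\<in>C. X \<subseteq> {e\<in>Ed. f e = v}} {e\<in>Ed. f e = v}"
  shows "pairwise disjnt C"
proof (rule pairwiseI)
  fix X X' assume X: "X \<in> C" "X' \<in> C" "X \<noteq> X'"
  show "disjnt X X'"
  proof (rule ccontr)
    assume "\<not> disjnt X X'"
    then obtain e where e: "e \<in> X" "e \<in> X'" unfolding disjnt_def by blast
    obtain v where v: "v \<in> V" "X \<subseteq> {e\<in>Ed. f e = v}" using assms(1) X by blast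
    obtain v' where v': "X' \<subseteq> {e\<in>Ed. f e = v'}" using assms(1) X by blast
    have "v' = v" using e v v' by auto
    have "is_partition_of {Z\<in>C. Z \<subseteq> {e\<in>Ed. f e = v}} {e\<in>Ed. f e = v}"
      using assms(2) v e by blast
    then show False
      using X e v v' \<open>v' = v\<close> unfolding is_partition_of_def by blast
  qed
qed

lemma bisep_graph_facts:
  assumes "bisep_graph V Ed r s C S D T"
  shows "\<forall>e\<in>Ed. s e \<in> V \<and> r e \<in> V"
    and "pairwise disjnt S" "pairwise disjnt T"
    and "\<forall>X\<in>S. finite X" "\<forall>Y\<in>T. finite Y"
    and "\<Union>S \<union> \<Union>T \<subseteq> Ed"
proof -
  have graph: "is_graph V Ed r s"
    and Cv: "\<forall>X\<in>C. \<exists>v\<in>V. X \<subseteq> {e\<in>Ed. s e = v}"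
    and Cpart: "\<forall>v\<in>V. {e\<in>Ed. s e = v} \<noteq> {} \<longrightarrow>
        is_partition_of {X\<in>C. X \<subseteq> {e\<in>Ed. s e = v}} {e\<in>Ed. s e = v}"
    and Dv: "\<forall>Y\<in>D. \<exists>v\<in>V. Y \<subseteq> {e\<in>Ed. r e = v}"
    and Dpart: "\<forall>v\<in>V. {e\<in>Ed. r e = v} \<noteq> {} \<longrightarrow>
        is_partition_of {Y\<in>D. Y \<subseteq> {e\<in>Ed. r e = v}} {e\<in>Ed. r e = v}"
    and SC: "S \<subseteq> {X\<in>C. finite X}" and TD: "T \<subseteq> {Y\<in>D. finite Y}"
    using assms unfolding bisep_graph_def by simp_all
  show "\<forall>e\<in>Ed. s e \<in> V \<and> r e \<in> V" using graph unfolding is_graph_def .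
  show "pairwise disjnt S"
    using pairwise_subset[OF pairwise_disjnt_if_fibrewise_partition[OF Cv Cpart]] SC by blast
  show "pairwise disjnt T"
    using pairwise_subset[OF pairwise_disjnt_if_fibrewise_partition[OF Dv Dpart]] TD by blast
  show "\<forall>X\<in>S. finite X" "\<forall>Y\<in>T. finite Y" using SC TD by blast+
  show "\<Union>S \<union> \<Union>T \<subseteq> Ed" using SC TD Cv Dv by blast
qed

lemma stepT_rtrancl_simT:
  assumes "(X, X') \<in> (stepT S T)\<^sup>*"
  shows "X' = X \<or> simT S T X X'"
proof (cases "X' = X")
  case False
  from assms False obtain Z where "(Z, X') \<in> stepT S T" by (auto elim: rtranclE)
  then have "X' \<in> S1 S T" unfolding stepT_def S1_def by (auto simp: Int_commute)
  moreover from assms False obtain Z' where "(X, Z') \<in> stepT S T"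
    by (auto elim: converse_rtranclE)
  then have "X \<in> S1 S T" unfolding stepT_def S1_def by auto
  ultimately show ?thesis using assms unfolding simT_def by blast
qed simp

lemma stepT_rtrancl_stays_in_saturated:
  assumes "(X, X') \<in> (stepT S T)\<^sup>*" "X \<subseteq> E'" "saturated S E'" "saturated T E'"
  shows "X' \<subseteq> E'"
  using assms(1,2)
proof (induction rule: rtrancl_induct)
  case (step Z X')
  then obtain Y where Y: "Y \<in> T" "Z \<inter> Y \<noteq> {}" "Y \<inter> X' \<noteq> {}" "X' \<in> S"
    unfolding stepT_def by blast
  then have "Y \<subseteq> E'" using step assms(4) unfolding saturated_def by blast
  then show ?case using Y assms(3) unfolding saturated_def by blast
qed

lemma finite_simT_class_if_saturated:
  assumes "X \<in> S1 S T" "X \<inter> E' \<noteq> {}" "finite E'" "saturated S E'" "saturated T E'"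
  shows "finite {X'. simT S T X X'}"
proof -
  have "X \<subseteq> E'" using assms(1,2,4) unfolding S1_def saturated_def by blast
  then have "{X'. simT S T X X'} \<subseteq> Pow E'"
    using stepT_rtrancl_stays_in_saturated assms(4,5) unfolding simT_def by blast
  then show ?thesis using assms(3) finite_subset by blast
qed

lemma finite_members_meeting:
  assumes "pairwise disjnt T" "finite A"
  shows "finite {Y\<in>T. Y \<inter> A \<noteq> {}}"
proof -
  have "finite {Y\<in>T. a \<in> Y}" for a
  proof (cases "\<exists>Y0\<in>T. a \<in> Y0")
    case True
    then obtain Y0 where "Y0 \<in> T" "a \<in> Y0" by blast
    then have "{Y\<in>T. a \<in> Y} \<subseteq> {Y0}"
      using assms(1) unfolding pairwise_def disjnt_def by blast
    then show ?thesis using finite_subset by blast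
  next
    case False
    then have "{Y\<in>T. a \<in> Y} = {}" by blast
    then show ?thesis by (metis finite.emptyI)
  qed
  moreover have "{Y\<in>T. Y \<inter> A \<noteq> {}} = (\<Union>a\<in>A. {Y\<in>T. a \<in> Y})" by blast
  ultimately show ?thesis using assms(2) by simp
qed

lemma saturated_hull_of_stepT_closed:
  assumes disjS: "pairwise disjnt S" and disjT: "pairwise disjnt T" and KS: "K \<subseteq> S"
    and closed: "\<And>X' X. X' \<in> K \<Longrightarrow> (X', X) \<in> stepT S T \<Longrightarrow> X \<in> K"
  defines "E' \<equiv> \<Union>K \<union> \<Union>{Y\<in>T. Y \<inter> \<Union>K \<noteq> {}}"
  shows "saturated S E'" and "saturated T E'"
proof -
  show "saturated S E'"
    unfolding saturated_def
  proof (intro ballI impI)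
    fix X assume X: "X \<in> S" "X \<inter> E' \<noteq> {}"
    have "X \<in> K"
    proof (cases "X \<inter> \<Union>K = {}")
      case True
      then obtain Y where Y: "Y \<in> T" "X \<inter> Y \<noteq> {}" "Y \<inter> \<Union>K \<noteq> {}"
        using X(2) unfolding E'_def by blast
      then obtain X' where X': "X' \<in> K" "X' \<inter> Y \<noteq> {}" by blast
      have "(X', X) \<in> stepT S T"
        unfolding stepT_def using KS X' Y X(1) by (blast intro: Int_commute[THEN trans])
      then show ?thesis using X'(1) closed by blast
    next
      case False
      then obtain X' where "X' \<in> K" "\<not> disjnt X X'" unfolding disjnt_def by blast
      then have "X = X'" using pairwiseD[OF disjS] KS X(1) by blast
      then show ?thesis using \<open>X' \<in> K\<close> by simp
    qed
    then show "X \<subseteq> E'" unfolding E'_def by auto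
  qed
  show "saturated T E'"
    unfolding saturated_def
  proof (intro ballI impI)
    fix Y assume Y: "Y \<in> T" "Y \<inter> E' \<noteq> {}"
    show "Y \<subseteq> E'"
    proof (cases "Y \<inter> \<Union>K = {}")
      case True
      then obtain Y' where "Y' \<in> T" "Y' \<inter> \<Union>K \<noteq> {}" "\<not> disjnt Y Y'"
        using Y(2) unfolding E'_def disjnt_def by blast
      moreover from this have "Y = Y'" using pairwiseD[OF disjT] Y(1) by blast
      ultimately show ?thesis unfolding E'_def by blast
    qed (use Y in \<open>auto simp: E'_def\<close>)
  qed
qed

lemma finite_saturated_hull:
  assumes disjS: "pairwise disjnt S" and disjT: "pairwise disjnt T"
    and finS: "\<forall>X\<in>S. finite X" and finT: "\<forall>Y\<in>T. finite Y"
    and tame: "\<forall>X\<in>S1 S T. finite {X'. simT S T X X'}"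
    and X0: "X0 \<in> S"
  obtains E' where "finite E'" "X0 \<subseteq> E'" "E' \<subseteq> \<Union>S \<union> \<Union>T" "saturated S E'" "saturated T E'"
proof -
  define K where "K = {X'. (X0, X') \<in> (stepT S T)\<^sup>*}"
  define E' where "E' = \<Union>K \<union> \<Union>{Y\<in>T. Y \<inter> \<Union>K \<noteq> {}}"
  have KS: "K \<subseteq> S"
    using X0 unfolding K_def stepT_def by (auto elim: rtranclE)
  have "K \<subseteq> insert X0 {X'. simT S T X0 X'}"
    using stepT_rtrancl_simT unfolding K_def by blast
  moreover have "finite {X'. simT S T X0 X'}"
    using tame unfolding simT_def by (cases "X0 \<in> S1 S T") auto
  ultimately have "finite K" using finite_subset by blast
  then have "finite (\<Union>K)" using KS finS by blast
  then have "finite {Y\<in>T. Y \<inter> \<Union>K \<noteq> {}}" using finite_members_meeting disjT by blast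
  then have "finite E'" using \<open>finite (\<Union>K)\<close> finT unfolding E'_def by auto
  moreover have "X0 \<subseteq> E'" unfolding E'_def K_def by auto
  moreover have "E' \<subseteq> \<Union>S \<union> \<Union>T" unfolding E'_def using KS by auto
  moreover have "saturated S E'" "saturated T E'"
    using saturated_hull_of_stepT_closed[OF disjS disjT KS] unfolding E'_def K_def
    by (auto intro: rtrancl_into_rtrancl)
  ultimately show ?thesis using that by blast
qed

lemma tame_imp_edge_in_finite_saturated:
  assumes bg: "bisep_graph V Ed r s C S D T" and "tame S T" and "e \<in> Ed"
  obtains E' where "finite E'" "e \<in> E'" "E' \<subseteq> Ed" "saturated S E'" "saturated T E'"
proof -
  note bg_facts = bisep_graph_facts[OF bg]
  have tameS: "\<forall>X\<in>S1 S T. finite {X'. simT S T X X'}"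
    and tameT: "\<forall>Y\<in>S1 T S. finite {Y'. simT T S Y Y'}"
    using \<open>tame S T\<close> unfolding tame_def by blast+
  consider X0 where "X0 \<in> S" "e \<in> X0" | Y0 where "Y0 \<in> T" "e \<in> Y0"
    | "e \<notin> \<Union>S \<union> \<Union>T" by blast
  then show ?thesis
  proof cases
    case (1 X0)
    obtain E' where "finite E'" "X0 \<subseteq> E'" "E' \<subseteq> \<Union>S \<union> \<Union>T" "saturated S E'" "saturated T E'"
      using finite_saturated_hull[OF bg_facts(2-5) tameS 1(1)] .
    moreover have "E' \<subseteq> Ed" using \<open>E' \<subseteq> \<Union>S \<union> \<Union>T\<close> bg_facts(6) by (rule subset_trans)
    ultimately show ?thesis using that 1(2) by blast
  next
    case (2 Y0)
    obtain E' where "finite E'" "Y0 \<subseteq> E'" "E' \<subseteq> \<Union>T \<union> \<Union>S" "saturated T E'" "saturated S E'"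
      using finite_saturated_hull[OF bg_facts(3,2,5,4) tameT 2(1)] .
    moreover have "E' \<subseteq> Ed" using \<open>E' \<subseteq> \<Union>T \<union> \<Union>S\<close> bg_facts(6) by blast
    ultimately show ?thesis using that 2(2) by blast
  next
    case 3
    then have "saturated S {e}" "saturated T {e}" unfolding saturated_def by blast+
    then show ?thesis using that[of "{e}"] \<open>e \<in> Ed\<close> by simp
  qed
qed

lemma tame_if_finite_saturated_cover:
  assumes cover: "\<forall>e\<in>\<Union>S \<union> \<Union>T. \<exists>E'. finite E' \<and> e \<in> E' \<and> saturated S E' \<and> saturated T E'"
  shows "tame S T"
proof -
  have "finite {X'. simT S T X X'}" if X: "X \<in> S1 S T"
    and cover: "\<forall>e\<in>\<Union>S \<union> \<Union>T. \<exists>E'. finite E' \<and> e \<in> E' \<and> saturated S E' \<and> saturated T E'"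
    for S T :: "'e set set" and X
  proof -
    obtain e where e: "e \<in> X" "X \<in> S" using X unfolding S1_def by blast
    then obtain E' where E': "finite E'" "e \<in> E'" "saturated S E'" "saturated T E'"
      using cover by blast
    have "X \<inter> E' \<noteq> {}" using e E'(2) by blast
    then show ?thesis using finite_simT_class_if_saturated[OF X _ E'(1,3,4)] by blast
  qed
  moreover have "\<forall>e\<in>\<Union>T \<union> \<Union>S. \<exists>E'. finite E' \<and> e \<in> E' \<and> saturated T E' \<and> saturated S E'"
    using cover by blast
  ultimately show ?thesis unfolding tame_def using cover by blast
qed

definition finite_complete_subobjs ::
  "'v set \<Rightarrow> 'e set \<Rightarrow> ('e \<Rightarrow> 'v) \<Rightarrow> ('e \<Rightarrow> 'v) \<Rightarrow> 'e set set \<Rightarrow> 'e set set \<Rightarrow>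
   ('v set \<times> 'e set) set" where
  "finite_complete_subobjs V Ed r s S T =
     {A. complete_subobj V Ed r s S T (fst A) (snd A) \<and> finite (fst A) \<and> finite (snd A)}"

lemma directed_finite_complete_subobjs:
  "directed_family (finite_complete_subobjs V Ed r s S T)"
  unfolding directed_family_def
proof (intro conjI ballI)
  have "({}, {}) \<in> finite_complete_subobjs V Ed r s S T"
    unfolding finite_complete_subobjs_def complete_subobj_def by simp
  then show "finite_complete_subobjs V Ed r s S T \<noteq> {}" by blast
next
  fix A B
  assume "A \<in> finite_complete_subobjs V Ed r s S T" "B \<in> finite_complete_subobjs V Ed r s S T"
  then have "(fst A \<union> fst B, snd A \<union> snd B) \<in> finite_complete_subobjs V Ed r s S T"
    unfolding finite_complete_subobjs_def by (auto intro: complete_subobj_Un)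
  then show "\<exists>G\<in>finite_complete_subobjs V Ed r s S T.
      fst A \<subseteq> fst G \<and> snd A \<subseteq> snd G \<and> fst B \<subseteq> fst G \<and> snd B \<subseteq> snd G"
    by (intro bexI[of _ "(fst A \<union> fst B, snd A \<union> snd B)"]) simp_all
qed

lemma union_of_finite_complete_subobjs_if_tame:
  assumes bg: "bisep_graph V Ed r s C S D T" and "tame S T"
  shows "is_union_of V Ed (finite_complete_subobjs V Ed r s S T)"
  unfolding is_union_of_def
proof (intro conjI ballI)
  fix v assume "v \<in> V"
  then have "({v}, {}) \<in> finite_complete_subobjs V Ed r s S T"
    unfolding finite_complete_subobjs_def complete_subobj_def by simp
  then show "\<exists>A\<in>finite_complete_subobjs V Ed r s S T. v \<in> fst A"
    by (intro bexI[of _ "({v}, {})"]) simp_all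
next
  fix e assume "e \<in> Ed"
  then obtain E' where E': "finite E'" "e \<in> E'" "E' \<subseteq> Ed" "saturated S E'" "saturated T E'"
    using tame_imp_edge_in_finite_saturated[OF bg \<open>tame S T\<close>] by blast
  have "(s ` E' \<union> r ` E', E') \<in> finite_complete_subobjs V Ed r s S T"
    using E' bisep_graph_facts(1)[OF bg]
    unfolding finite_complete_subobjs_def complete_subobj_iff_saturated by auto
  then show "\<exists>A\<in>finite_complete_subobjs V Ed r s S T. e \<in> snd A"
    using E'(2) by (intro bexI[of _ "(s ` E' \<union> r ` E', E')"]) simp_all
qed

theorem mainTheorem1:
  fixes V :: "'v set" and Ed :: "'e set" and r s :: "'e \<Rightarrow> 'v"
    and C S D T :: "'e set set"
  assumes "bisep_graph V Ed r s C S D T"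
  shows "tame S T \<longleftrightarrow>
    (\<exists>F. directed_family F \<and>
         (\<forall>A\<in>F. complete_subobj V Ed r s S T (fst A) (snd A) \<and>
                 finite (fst A) \<and> finite (snd A)) \<and>
         is_union_of V Ed F)"
    (is "_ \<longleftrightarrow> (\<exists>F. ?family F)")
proof
  assume "tame S T"
  have "\<forall>A\<in>finite_complete_subobjs V Ed r s S T.
      complete_subobj V Ed r s S T (fst A) (snd A) \<and> finite (fst A) \<and> finite (snd A)"
    unfolding finite_complete_subobjs_def by blast
  with directed_finite_complete_subobjs
    union_of_finite_complete_subobjs_if_tame[OF assms \<open>tame S T\<close>]
  show "\<exists>F. ?family F" by (intro exI[of _ "finite_complete_subobjs V Ed r s S T"] conjI)
next
  assume "\<exists>F. ?family F"
  then obtain F where F: "\<forall>A\<in>F. complete_subobj V Ed r s S T (fst A) (snd A) \<and> finite (snd A)"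
    and cover: "\<forall>e\<in>Ed. \<exists>A\<in>F. e \<in> snd A"
    unfolding is_union_of_def by blast
  have "\<exists>E'. finite E' \<and> e \<in> E' \<and> saturated S E' \<and> saturated T E'" if "e \<in> Ed" for e
  proof -
    obtain A where A: "A \<in> F" "e \<in> snd A" using cover \<open>e \<in> Ed\<close> by blast
    then have "finite (snd A)" "saturated S (snd A)" "saturated T (snd A)"
      using F unfolding complete_subobj_iff_saturated by simp_all
    then show ?thesis using A(2) by blast
  qed
  then show "tame S T"
    using bisep_graph_facts(6)[OF assms] by (intro tame_if_finite_saturated_cover) blast
qed

end
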